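(* Let $\alpha=[a_0;a_1,a_2,\dots]$ be irrational with convergents $p_k/q_k$, and for integers $k\ge1$, $0\le M<q_k$ let \[ B_{k,M}(x)= \log \frac{P_M (\alpha, (-1)^k x/q_k)}{P_M (p_k/q_k, (-1)^k x/q_k)} - \sum_{n=1}^M \sin (\pi n \| q_k \alpha \| /q_k ) \cot \left( \pi \frac{n (-1)^k p_k+x}{q_k} \right) . \] (i) Let $k \ge 1$ and $0 \le M < q_k$ be integers, and assume that $q_k \| q_k \alpha \| \le 1-c_k$ and $-1<x \le 1-\frac{q_k \| q_k \alpha \|}{1-c_k}$ for some $c_k$ with $10/q_k^2 \le c_k<1$. Then \[ -C \frac{\log (4/c_k)}{(1-|x|)^2 a_{k+1}^2} \le B_{k,M}(x) \le C \frac{1}{a_{k+1}^2 q_k} \] with a universal constant $C>0$. (ii) Let $N=\sum_{k=0}^{K-1} b_k q_k$ be the Ostrowski expansion of a non-negative integer. For any $1 \le k \le K-1$, any $0 \le M <q_k$ and any $0 \le b \le b_k-1$, \[ B_{k,M}(b q_k \| q_k \alpha \| + \varepsilon_k (N)) \le C \frac{1}{a_{k+1}^2q_k} \] with a universal constant $C>0$.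
   Context: $P_N(\beta,x)=\prod_{n=1}^N|2\sin(\pi(n\beta+x))|$. $p_k/q_k=[a_0;a_1,\dots,a_k]$; $\|y\|$ is distance to nearest integer. Ostrowski expansion: the unique representation $N=\sum_{k=0}^{K-1}b_kq_k$ with integers $0\le b_0<a_1$, $0\le b_k\le a_{k+1}$, and $b_{k-1}=0$ whenever $b_k=a_{k+1}$. $\varepsilon_k(N):=q_k\sum_{\ell=k+1}^{K-1}(-1)^{k+\ell}b_\ell\|q_\ell\alpha\|$. *)

theory Defs
  imports Complex_Main
begin

fun cf_rem :: "real \<Rightarrow> nat \<Rightarrow> real" where
  "cf_rem \<alpha> 0 = \<alpha>"
| "cf_rem \<alpha> (Suc n) = 1 / frac (cf_rem \<alpha> n)"

definition cf_a :: "real \<Rightarrow> nat \<Rightarrow> int" where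
  "cf_a \<alpha> n = \<lfloor>cf_rem \<alpha> n\<rfloor>"

fun cf_p :: "real \<Rightarrow> nat \<Rightarrow> int" where
  "cf_p \<alpha> 0 = cf_a \<alpha> 0"
| "cf_p \<alpha> (Suc 0) = cf_a \<alpha> 1 * cf_a \<alpha> 0 + 1"
| "cf_p \<alpha> (Suc (Suc n)) = cf_a \<alpha> (Suc (Suc n)) * cf_p \<alpha> (Suc n) + cf_p \<alpha> n"

fun cf_q :: "real \<Rightarrow> nat \<Rightarrow> int" where
  "cf_q \<alpha> 0 = 1"
| "cf_q \<alpha> (Suc 0) = cf_a \<alpha> 1"
| "cf_q \<alpha> (Suc (Suc n)) = cf_a \<alpha> (Suc (Suc n)) * cf_q \<alpha> (Suc n) + cf_q \<alpha> n"

definition dist_int :: "real \<Rightarrow> real" where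
  "dist_int y = \<bar>y - of_int (round y)\<bar>"

definition sine_prod :: "nat \<Rightarrow> real \<Rightarrow> real \<Rightarrow> real" where
  "sine_prod N \<beta> x = (\<Prod>n=1..N. \<bar>2 * sin (pi * (real n * \<beta> + x))\<bar>)"

definition B_fun :: "real \<Rightarrow> nat \<Rightarrow> nat \<Rightarrow> real \<Rightarrow> real" where
  "B_fun \<alpha> k M x =
     (let p = real_of_int (cf_p \<alpha> k); q = real_of_int (cf_q \<alpha> k);
          s = (-1) ^ k * x / q
      in ln (sine_prod M \<alpha> s / sine_prod M (p / q) s)
         - (\<Sum>n=1..M. sin (pi * real n * dist_int (q * \<alpha>) / q)
                        * cot (pi * (real n * (-1) ^ k * p + x) / q)))"

definition ostrowski_expansion :: "real \<Rightarrow> nat \<Rightarrow> nat \<Rightarrow> (nat \<Rightarrow> nat) \<Rightarrow> bool" where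
  "ostrowski_expansion \<alpha> N K b \<longleftrightarrow>
     int N = (\<Sum>k<K. int (b k) * cf_q \<alpha> k)
     \<and> (0 < K \<longrightarrow> int (b 0) < cf_a \<alpha> 1)
     \<and> (\<forall>k<K. int (b k) \<le> cf_a \<alpha> (Suc k))
     \<and> (\<forall>k<K. 0 < k \<longrightarrow> int (b k) = cf_a \<alpha> (Suc k) \<longrightarrow> b (k - 1) = 0)"

definition ostrowski_eps :: "real \<Rightarrow> nat \<Rightarrow> (nat \<Rightarrow> nat) \<Rightarrow> nat \<Rightarrow> real" where
  "ostrowski_eps \<alpha> K b k = real_of_int (cf_q \<alpha> k) *
     (\<Sum>l\<in>{k+1..<K}. (-1) ^ (k + l) * real (b l) * dist_int (real_of_int (cf_q \<alpha> l) * \<alpha>))"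

end

theory Submission
  imports Defs
begin

text \<open>
  Put \<open>\<delta> = \<parallel>q\<^sub>k \<alpha>\<parallel>\<close>. Since \<open>q\<^sub>k \<alpha> = p\<^sub>k + (-1)\<^sup>k \<delta>\<close>, the \<open>n\<close>-th factors of the two sine products
  are \<open>|sin (\<phi> + h)|\<close> and \<open>|sin \<phi>|\<close> with \<open>\<phi> = \<pi> (r + x) / q\<^sub>k\<close> and \<open>h = \<pi> n \<delta> / q\<^sub>k\<close>, where \<open>r\<close> is
  the residue of \<open>(-1)\<^sup>k n p\<^sub>k\<close> modulo \<open>q\<^sub>k\<close>; as \<open>p\<^sub>k\<close> and \<open>q\<^sub>k\<close> are coprime, these residues are
  distinct elements of \<open>{1, ..., q\<^sub>k - 1}\<close>. So, as long as all angles lie in \<open>(0, \<pi>)\<close>, \<open>B\<^sub>k\<^sub>,\<^sub>M(x)\<close>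
  is the sum of the defects \<open>ln y - sin h cot \<phi>\<close> with \<open>y = sin (\<phi> + h) / sin \<phi> = cos h + sin h cot \<phi>\<close>.
  Every defect is \<open>\<le> 0\<close> because \<open>ln y \<le> y - 1\<close>, which gives the upper bounds with room to spare.
  For the lower bound, \<open>y \<ge> c\<close> and \<open>ln y \<ge> (y - 1) - 4 ln (4/c) (y - 1)\<^sup>2\<close> bound the defect below
  by a multiple of \<open>ln (4/c) h\<^sup>2 (1/\<phi>\<^sup>2 + 1/(\<pi> - \<phi>)\<^sup>2) = ln (4/c) (n \<delta>)\<^sup>2 (1/(r + x)\<^sup>2 + 1/(q\<^sub>k - r - x)\<^sup>2)\<close>;
  as \<open>n \<delta> < q\<^sub>k \<delta> < 1 / a\<^sub>k\<^sub>+\<^sub>1\<close> and the residues are distinct, the sum over \<open>n\<close> is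
  \<open>O(ln (4/c) / ((1 - |x|)\<^sup>2 a\<^sub>k\<^sub>+\<^sub>1\<^sup>2))\<close>. In part (ii) the alternating tail of the Ostrowski expansion
  puts \<open>\<epsilon>\<^sub>k(N)\<close> into \<open>[-q\<^sub>k \<delta>\<^sub>k, q\<^sub>k \<delta>\<^sub>k\<^sub>+\<^sub>1]\<close>, which keeps all angles in \<open>(0, \<pi>)\<close>.
\<close>

section \<open>Elementary inequalities\<close>

lemma sum_inverse_square_le:
  "1 \<le> N \<Longrightarrow> (\<Sum>r\<in>{1..N}. 1 / (real_of_int r)\<^sup>2) \<le> 2 - 1 / real_of_int N"
proof (induction N rule: int_ge_induct)
  case (step N)
  have "1 / (real_of_int N + 1)\<^sup>2 \<le> 1 / (real_of_int N * (real_of_int N + 1))"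
    using step.hyps by (intro divide_left_mono) (simp_all add: power2_eq_square)
  also have "\<dots> = 1 / real_of_int N - 1 / (real_of_int N + 1)"
    using step.hyps by (simp add: field_simps)
  finally have "1 / (real_of_int N + 1)\<^sup>2 \<le> 1 / real_of_int N - 1 / (real_of_int N + 1)" .
  moreover have "{1..N + 1} = insert (N + 1) {1..N}" using step.hyps by auto
  ultimately show ?case using step.IH by simp
qed simp

lemma sum_inverse_shifted_square_le:
  fixes S :: "int set"
  assumes "finite S" "S \<subseteq> {1..}" "\<bar>z\<bar> < 1"
  shows "(\<Sum>r\<in>S. 1 / (real_of_int r + z)\<^sup>2) \<le> 2 / (1 - \<bar>z\<bar>)\<^sup>2"
proof -
  define N where "N = Max (insert 1 S)"
  have "S \<subseteq> {1..N}" "1 \<le> N" using assms(1,2) by (auto simp: N_def)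
  define c where "c = 1 / (1 - \<bar>z\<bar>)\<^sup>2"
  have term_le: "1 / (real_of_int r + z)\<^sup>2 \<le> c * (1 / (real_of_int r)\<^sup>2)" if "1 \<le> r" for r
  proof -
    have "real_of_int r * (1 - \<bar>z\<bar>) \<le> real_of_int r + z"
      using that mult_right_mono[of 1 "real_of_int r" "\<bar>z\<bar>"] by (simp add: algebra_simps)
    moreover have "0 < real_of_int r * (1 - \<bar>z\<bar>)" using that assms(3) by simp
    ultimately have "1 / (real_of_int r + z)\<^sup>2 \<le> 1 / (real_of_int r * (1 - \<bar>z\<bar>))\<^sup>2"
      by (intro divide_left_mono power_mono mult_pos_pos) auto
    then show ?thesis by (simp add: c_def power_mult_distrib mult.commute)
  qed
  have "(\<Sum>r\<in>S. 1 / (real_of_int r + z)\<^sup>2) \<le> (\<Sum>r\<in>S. c * (1 / (real_of_int r)\<^sup>2))"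
    using assms(2) by (intro sum_mono term_le) auto
  also have "\<dots> \<le> (\<Sum>r\<in>{1..N}. c * (1 / (real_of_int r)\<^sup>2))"
    using \<open>S \<subseteq> {1..N}\<close> by (intro sum_mono2) (auto simp: c_def)
  also have "\<dots> = c * (\<Sum>r\<in>{1..N}. 1 / (real_of_int r)\<^sup>2)"
    by (simp add: sum_distrib_left)
  also have "\<dots> \<le> c * 2"
  proof -
    have "0 < 1 / real_of_int N" using \<open>1 \<le> N\<close> by simp
    then have "(\<Sum>r\<in>{1..N}. 1 / (real_of_int r)\<^sup>2) \<le> 2"
      using sum_inverse_square_le[OF \<open>1 \<le> N\<close>] by linarith
    then show ?thesis by (intro mult_left_mono) (auto simp: c_def)
  qed
  finally show ?thesis by (simp add: c_def)
qed

lemma abs_sin_add_int_pi: "\<bar>sin (x + of_int i * pi)\<bar> = \<bar>sin x\<bar>"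
proof -
  have "sin (of_int i * pi) = 0" by (auto simp: sin_zero_iff_int2)
  then have "\<bar>cos (of_int i * pi)\<bar> = 1"
    using sin_cos_squared_add[of "of_int i * pi"] by (simp add: abs_square_eq_1)
  then show ?thesis using \<open>sin (of_int i * pi) = 0\<close> by (simp add: sin_add abs_mult)
qed

lemma cot_add_int_pi: "cot (x + of_int i * pi) = cot x"
  by (simp add: cot_altdef)

lemma abs_sin_minus_one_power: "\<bar>sin ((-1) ^ k * x)\<bar> = \<bar>sin (x::real)\<bar>"
  by (cases "even k") simp_all

lemma x_cos_le_sin:
  assumes "0 \<le> t" "t \<le> pi" shows "t * cos t \<le> sin t"
proof -
  have "sin 0 - 0 * cos 0 \<le> sin t - t * cos t"
  proof (rule DERIV_nonneg_imp_increasing_open[OF assms(1)])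
    fix s assume "0 < s" "s < t"
    then have "0 \<le> s * sin s" using assms by (intro mult_nonneg_nonneg sin_ge_zero) auto
    moreover have "((\<lambda>s. sin s - s * cos s) has_real_derivative s * sin s) (at s)"
      by (auto intro!: derivative_eq_intros simp: algebra_simps)
    ultimately show "\<exists>y. ((\<lambda>s. sin s - s * cos s) has_real_derivative y) (at s) \<and> 0 \<le> y" by blast
  qed (intro continuous_intros)
  then show ?thesis by simp
qed

lemma sin_div_antimono:
  assumes "0 < b" "b \<le> a" "a \<le> pi" shows "b * sin a \<le> a * sin b"
proof -
  have "sin a / a \<le> sin b / b"
  proof (rule DERIV_nonpos_imp_decreasing_open[OF assms(2)])
    fix s assume s: "b < s" "s < a"
    then have "(cos s * s - sin s) / s\<^sup>2 \<le> 0"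
      using x_cos_le_sin[of s] assms by (intro divide_nonpos_nonneg) (auto simp: algebra_simps)
    moreover have "((\<lambda>s. sin s / s) has_real_derivative (cos s * s - sin s) / s\<^sup>2) (at s)"
      using s assms by (auto intro!: derivative_eq_intros simp: power2_eq_square)
    ultimately show "\<exists>y. ((\<lambda>s. sin s / s) has_real_derivative y) (at s) \<and> y \<le> 0" by blast
  next
    show "continuous_on {b..a} (\<lambda>s. sin s / s)" using assms by (intro continuous_intros) auto
  qed
  then show ?thesis using assms by (simp add: field_simps)
qed

lemma cot_le_inverse:
  assumes "0 < t" "t < pi" shows "cot t \<le> 1 / t"
  using x_cos_le_sin[of t] sin_gt_zero[OF assms] assms by (simp add: cot_def field_simps)

lemma cot_square_le:
  assumes "0 < t" "t < pi" shows "(cot t)\<^sup>2 \<le> 1 / t\<^sup>2 + 1 / (pi - t)\<^sup>2"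
proof (cases "0 \<le> cot t")
  case True
  then have "(cot t)\<^sup>2 \<le> (1 / t)\<^sup>2" using cot_le_inverse[OF assms] by (intro power_mono)
  then show ?thesis by (simp add: power_divide add_increasing2)
next
  case False
  have "- cot t = cot (pi - t)" by (simp add: cot_def)
  also have "\<dots> \<le> 1 / (pi - t)" using assms by (intro cot_le_inverse) auto
  finally have "(- cot t)\<^sup>2 \<le> (1 / (pi - t))\<^sup>2" using False by (intro power_mono) auto
  then show ?thesis by (simp add: power_divide add_increasing)
qed

lemma one_minus_cos_le: "1 - cos h \<le> (h::real)\<^sup>2 / 2"
proof -
  have "(sin (h / 2))\<^sup>2 \<le> (h / 2)\<^sup>2"
    using abs_sin_x_le_abs_x[of "h / 2"] by (metis abs_ge_zero power2_abs power_mono)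
  then show ?thesis using cos_double_sin[of "h / 2"] by (simp add: power_divide)
qed

lemma three_quarters_le_ln_4: "3 / 4 \<le> ln (4::real)"
  using ln_le_minus_one[of "1 / 4 :: real"] by (simp add: ln_div)

lemma ln_ge_minus_square:
  fixes c y :: real
  assumes "0 < c" "c < 1" "c \<le> y"
  shows "(y - 1) - 4 * ln (4 / c) * (y - 1)\<^sup>2 \<le> ln y"
proof -
  have "ln 4 \<le> ln (4 / c)" using assms by (simp add: field_simps)
  then have L: "3 / 4 \<le> ln (4 / c)" using three_quarters_le_ln_4 by linarith
  show ?thesis
  proof (cases "1 / 2 \<le> y")
    case True
    have "(y - 1)\<^sup>2 / y \<le> 2 * (y - 1)\<^sup>2"
      using True mult_left_mono[of 1 "2 * y" "(y - 1)\<^sup>2"] by (simp add: field_simps)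
    also have "\<dots> \<le> 4 * ln (4 / c) * (y - 1)\<^sup>2" using L by (intro mult_right_mono) auto
    finally have "(y - 1) - 4 * ln (4 / c) * (y - 1)\<^sup>2 \<le> 1 - 1 / y"
      using True by (simp add: field_simps power2_eq_square)
    also have "\<dots> \<le> ln y" using ln_le_minus_one[of "1 / y"] True by (simp add: ln_div)
    finally show ?thesis .
  next
    case False
    then have "(1 / 2)\<^sup>2 \<le> (1 - y)\<^sup>2" by (intro power_mono) auto
    then have "1 / 4 \<le> (y - 1)\<^sup>2" by (simp add: power2_commute power_divide)
    then have "ln (4 / c) \<le> 4 * ln (4 / c) * (y - 1)\<^sup>2"
      using L mult_left_mono[of "1 / 4" "(y - 1)\<^sup>2" "4 * ln (4 / c)"] by simp
    moreover have "- ln (4 / c) \<le> ln c" using assms three_quarters_le_ln_4 by (simp add: ln_div)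
    moreover have "ln c \<le> ln y" using assms by simp
    ultimately show ?thesis using False by linarith
  qed
qed

definition sine_ratio_defect :: "real \<Rightarrow> real \<Rightarrow> real" where
  "sine_ratio_defect \<phi> h = ln (sin (\<phi> + h) / sin \<phi>) - sin h * cot \<phi>"

lemma sin_add_div_sin: "sin \<phi> \<noteq> 0 \<Longrightarrow> sin (\<phi> + h) / sin \<phi> = cos h + sin h * cot \<phi>"
  by (simp add: sin_add cot_def field_simps)

lemma sin_add_div_sin_ge:
  assumes "0 < \<phi>" "0 \<le> h" "\<phi> + h < pi"
  shows "1 - h / (pi - \<phi>) \<le> sin (\<phi> + h) / sin \<phi>"
proof -
  have "(pi - \<phi> - h) * sin (pi - \<phi>) \<le> (pi - \<phi>) * sin (pi - \<phi> - h)"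
    using assms by (intro sin_div_antimono) auto
  moreover have "sin (pi - \<phi> - h) = sin (\<phi> + h)" by (metis diff_diff_eq sin_pi_minus)
  ultimately have "(pi - \<phi> - h) * sin \<phi> \<le> (pi - \<phi>) * sin (\<phi> + h)" by simp
  then show ?thesis using sin_gt_zero[of \<phi>] assms by (simp add: field_simps)
qed

lemma sine_ratio_defect_nonpos:
  assumes "0 < \<phi>" "0 \<le> h" "\<phi> + h < pi"
  shows "sine_ratio_defect \<phi> h \<le> 0"
proof -
  have "0 < sin (\<phi> + h) / sin \<phi>" using assms by (simp add: sin_gt_zero)
  then have "ln (sin (\<phi> + h) / sin \<phi>) \<le> cos h + sin h * cot \<phi> - 1"
    using ln_le_minus_one sin_add_div_sin[of \<phi> h] sin_gt_zero[of \<phi>] assms by fastforce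
  then show ?thesis using cos_le_one[of h] unfolding sine_ratio_defect_def by linarith
qed

lemma square_le_16_mult_inverse_squares:
  assumes "0 < \<phi>" "\<phi> < pi"
  shows "h\<^sup>2 \<le> 16 * (h\<^sup>2 * (1 / \<phi>\<^sup>2 + 1 / (pi - \<phi>)\<^sup>2))"
proof -
  have "\<phi>\<^sup>2 \<le> 4\<^sup>2" using assms pi_less_4 by (intro power_mono) auto
  then have "h\<^sup>2 \<le> 16 * (h\<^sup>2 * (1 / \<phi>\<^sup>2))"
    using assms(1) mult_left_mono[of "\<phi>\<^sup>2" 16 "h\<^sup>2"] by (simp add: field_simps)
  also have "\<dots> \<le> 16 * (h\<^sup>2 * (1 / \<phi>\<^sup>2 + 1 / (pi - \<phi>)\<^sup>2))" by (simp add: algebra_simps)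
  finally show ?thesis .
qed

lemma sin_add_div_sin_minus_one_square_le:
  assumes "0 < \<phi>" "\<phi> < pi"
  shows "(sin (\<phi> + h) / sin \<phi> - 1)\<^sup>2 \<le> 34 * (h\<^sup>2 * (1 / \<phi>\<^sup>2 + 1 / (pi - \<phi>)\<^sup>2))"
proof -
  define Q where "Q = h\<^sup>2 * (1 / \<phi>\<^sup>2 + 1 / (pi - \<phi>)\<^sup>2)"
  have "(sin h * cot \<phi>)\<^sup>2 \<le> h\<^sup>2 * (cot \<phi>)\<^sup>2"
    using abs_sin_x_le_abs_x[of h] unfolding power_mult_distrib
    by (intro mult_right_mono) (auto simp: abs_le_square_iff)
  also have "\<dots> \<le> Q" unfolding Q_def using assms by (intro mult_left_mono cot_square_le) auto
  finally have sin_cot_sq: "(sin h * cot \<phi>)\<^sup>2 \<le> Q" .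
  have "(1 - cos h)\<^sup>2 \<le> 2 * (1 - cos h)"
    unfolding power2_eq_square using cos_le_one[of h] cos_ge_minus_one[of h]
    by (intro mult_right_mono) auto
  also have "\<dots> \<le> h\<^sup>2" using one_minus_cos_le[of h] by simp
  also have "\<dots> \<le> 16 * Q" unfolding Q_def using assms by (rule square_le_16_mult_inverse_squares)
  finally have cos_sq: "(1 - cos h)\<^sup>2 \<le> 16 * Q" .
  have "sin (\<phi> + h) / sin \<phi> - 1 = sin h * cot \<phi> - (1 - cos h)"
    using sin_gt_zero[OF assms] by (simp add: sin_add_div_sin)
  then have "(sin (\<phi> + h) / sin \<phi> - 1)\<^sup>2 \<le> 2 * (sin h * cot \<phi>)\<^sup>2 + 2 * (1 - cos h)\<^sup>2"
    using sum_squares_ge_zero[of "sin h * cot \<phi> + (1 - cos h)" 0]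
    by (simp add: power2_eq_square algebra_simps)
  then show ?thesis using sin_cot_sq cos_sq by (simp add: Q_def)
qed

lemma sine_ratio_defect_ge:
  assumes "0 < \<phi>" "0 \<le> h" "\<phi> + h < pi" "0 < c" "c < 1"
    and "c \<le> 1 - h / (pi - \<phi>)"
  shows "- 200 * ln (4 / c) * (h\<^sup>2 * (1 / \<phi>\<^sup>2 + 1 / (pi - \<phi>)\<^sup>2)) \<le> sine_ratio_defect \<phi> h"
proof -
  define L where "L = ln (4 / c)"
  define Q where "Q = h\<^sup>2 * (1 / \<phi>\<^sup>2 + 1 / (pi - \<phi>)\<^sup>2)"
  define y where "y = sin (\<phi> + h) / sin \<phi>"
  have "ln 4 \<le> L" using assms by (simp add: L_def field_simps)
  then have L: "3 / 4 \<le> L" using three_quarters_le_ln_4 by linarith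
  have "c \<le> y" unfolding y_def using assms sin_add_div_sin_ge[of \<phi> h] by linarith
  then have "(y - 1) - 4 * L * (y - 1)\<^sup>2 \<le> ln y"
    unfolding L_def using assms by (intro ln_ge_minus_square) auto
  moreover have "y - 1 = sin h * cot \<phi> - (1 - cos h)"
    unfolding y_def using sin_gt_zero[of \<phi>] assms by (simp add: sin_add_div_sin)
  \<comment> \<open>the defect is \<open>(ln y - (y - 1)) - (1 - cos h)\<close>\<close>
  ultimately have "- 4 * L * (y - 1)\<^sup>2 - h\<^sup>2 / 2 \<le> sine_ratio_defect \<phi> h"
    using one_minus_cos_le[of h] unfolding sine_ratio_defect_def y_def by linarith
  moreover have "4 * L * (y - 1)\<^sup>2 \<le> 4 * L * (34 * Q)"
    using sin_add_div_sin_minus_one_square_le[of \<phi> h] assms L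
    by (intro mult_left_mono) (auto simp: y_def Q_def)
  moreover have "h\<^sup>2 / 2 \<le> 64 * (L * Q)"
  proof -
    have "0 \<le> Q" by (simp add: Q_def)
    then show ?thesis
      using square_le_16_mult_inverse_squares[of \<phi> h] assms mult_right_mono[OF L, of Q]
      unfolding Q_def by linarith
  qed
  ultimately show ?thesis unfolding L_def[symmetric] Q_def[symmetric] by linarith
qed

section \<open>Continued fractions\<close>

lemma cf_rem_not_rat:
  assumes "\<alpha> \<notin> \<rat>" shows "cf_rem \<alpha> n \<notin> \<rat>"
proof (induction n)
  case 0
  then show ?case using assms by simp
next
  case (Suc n)
  have "frac (cf_rem \<alpha> n) \<notin> \<rat>"
    using Suc Rats_add[OF _ Rats_of_int, of "frac (cf_rem \<alpha> n)" "\<lfloor>cf_rem \<alpha> n\<rfloor>"]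
    by (auto simp: frac_def)
  then show ?case by (simp add: divide_inverse)
qed

lemma frac_cf_rem_pos: "\<alpha> \<notin> \<rat> \<Longrightarrow> 0 < frac (cf_rem \<alpha> n)"
  using cf_rem_not_rat Ints_subset_Rats by (metis frac_eq_0_iff frac_ge_0 order_le_less subsetD)

lemma cf_a_ge_1:
  assumes "\<alpha> \<notin> \<rat>" shows "1 \<le> cf_a \<alpha> (Suc n)"
proof -
  have "1 < 1 / frac (cf_rem \<alpha> n)"
    using frac_cf_rem_pos[OF assms, of n] frac_lt_1[of "cf_rem \<alpha> n"] by simp
  then show ?thesis unfolding cf_a_def by simp
qed

lemma cf_q_pos: "\<alpha> \<notin> \<rat> \<Longrightarrow> 0 < cf_q \<alpha> n"
proof (induction n rule: cf_q.induct)
  case (2 \<alpha>)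
  then show ?case using cf_a_ge_1[of \<alpha> 0] by simp
next
  case (3 \<alpha> n)
  then show ?case using cf_a_ge_1[of \<alpha> "Suc n"] by (simp add: add_pos_pos)
qed simp

lemma cf_q_ge_2:
  assumes "\<alpha> \<notin> \<rat>" "1 \<le> k" shows "2 \<le> cf_q \<alpha> (Suc k)"
proof -
  obtain m where "k = Suc m" using assms(2) by (cases k) auto
  moreover have "1 * 1 \<le> cf_a \<alpha> (Suc (Suc m)) * cf_q \<alpha> (Suc m)"
    using cf_a_ge_1[OF assms(1), of "Suc m"] cf_q_pos[OF assms(1), of "Suc m"]
    by (intro mult_mono) auto
  ultimately show ?thesis using cf_q_pos[OF assms(1), of m] by simp
qed

definition cf_delta :: "real \<Rightarrow> nat \<Rightarrow> real" where
  "cf_delta \<alpha> n = (-1) ^ n * (real_of_int (cf_q \<alpha> n) * \<alpha> - real_of_int (cf_p \<alpha> n))"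

lemma cf_delta_Suc_Suc:
  "cf_delta \<alpha> (Suc (Suc n)) = cf_delta \<alpha> n - cf_a \<alpha> (Suc (Suc n)) * cf_delta \<alpha> (Suc n)"
  by (simp add: cf_delta_def algebra_simps)

lemma frac_cf_rem: "frac (cf_rem \<alpha> n) = cf_rem \<alpha> n - cf_a \<alpha> n"
  by (simp add: frac_def cf_a_def)

lemma cf_delta_Suc:
  assumes "\<alpha> \<notin> \<rat>" shows "cf_delta \<alpha> (Suc n) = cf_delta \<alpha> n * frac (cf_rem \<alpha> (Suc n))"
proof (induction n)
  case 0
  have "cf_delta \<alpha> 0 = frac \<alpha>" "cf_delta \<alpha> 1 = 1 - cf_a \<alpha> 1 * frac \<alpha>"
    by (simp_all add: cf_delta_def frac_def cf_a_def algebra_simps)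
  moreover have "frac (cf_rem \<alpha> 1) = 1 / frac \<alpha> - cf_a \<alpha> 1"
    using frac_cf_rem[of \<alpha> 1] by simp
  ultimately show ?case
    using frac_cf_rem_pos[OF assms, of 0] by (simp add: field_simps)
next
  case (Suc n)
  have "cf_delta \<alpha> n = cf_delta \<alpha> (Suc n) * cf_rem \<alpha> (Suc (Suc n))"
    using Suc frac_cf_rem_pos[OF assms, of "Suc n"] by simp
  then show ?case
    by (simp only: cf_delta_Suc_Suc frac_cf_rem) (simp add: algebra_simps)
qed

lemma cf_delta_pos: "\<alpha> \<notin> \<rat> \<Longrightarrow> 0 < cf_delta \<alpha> n"
proof (induction n)
  case 0
  then show ?case using frac_cf_rem_pos[of \<alpha> 0] by (simp add: cf_delta_def frac_def cf_a_def)
next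
  case (Suc n)
  then show ?case using frac_cf_rem_pos[of \<alpha> "Suc n"] by (simp add: cf_delta_Suc)
qed

lemma cf_delta_eq: "cf_delta \<alpha> n = cf_a \<alpha> (Suc (Suc n)) * cf_delta \<alpha> (Suc n) + cf_delta \<alpha> (Suc (Suc n))"
  by (simp add: cf_delta_Suc_Suc)

lemma cf_q_delta_det: "cf_q \<alpha> (Suc n) * cf_delta \<alpha> n + cf_q \<alpha> n * cf_delta \<alpha> (Suc n) = 1"
proof (induction n)
  case 0
  then show ?case by (simp add: cf_delta_def algebra_simps)
next
  case (Suc n)
  then show ?case by (simp only: cf_q.simps cf_delta_Suc_Suc of_int_add of_int_mult) (simp add: algebra_simps)
qed

lemma cf_p_q_det: "cf_p \<alpha> (Suc n) * cf_q \<alpha> n - cf_p \<alpha> n * cf_q \<alpha> (Suc n) = (-1) ^ n"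
  by (induction n) (simp_all add: algebra_simps)

lemma cf_q_delta_less_1:
  assumes "\<alpha> \<notin> \<rat>" shows "cf_q \<alpha> (Suc k) * cf_delta \<alpha> k < 1"
proof -
  have "0 < cf_q \<alpha> k * cf_delta \<alpha> (Suc k)"
    using cf_q_pos[OF assms, of k] cf_delta_pos[OF assms, of "Suc k"] by simp
  then show ?thesis using cf_q_delta_det[of \<alpha> k] by linarith
qed

lemma cf_a_q_delta_less_1:
  assumes "\<alpha> \<notin> \<rat>" shows "cf_a \<alpha> (Suc k) * cf_q \<alpha> k * cf_delta \<alpha> k < 1"
proof -
  have "cf_a \<alpha> (Suc k) * cf_q \<alpha> k \<le> cf_q \<alpha> (Suc k)"
    using cf_q_pos[OF assms, of "k - 1"] by (cases k) simp_all
  then have "cf_a \<alpha> (Suc k) * cf_q \<alpha> k * cf_delta \<alpha> k \<le> cf_q \<alpha> (Suc k) * cf_delta \<alpha> k"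
    using cf_delta_pos[OF assms, of k] by (intro mult_right_mono) linarith+
  then show ?thesis using cf_q_delta_less_1[OF assms, of k] by linarith
qed

lemma cf_delta_mult_square_le:
  assumes "\<alpha> \<notin> \<rat>" "real n \<le> cf_q \<alpha> k"
  shows "(real n * cf_delta \<alpha> k)\<^sup>2 \<le> 1 / (cf_a \<alpha> (Suc k))\<^sup>2"
proof -
  have a: "1 \<le> real_of_int (cf_a \<alpha> (Suc k))" using cf_a_ge_1[OF assms(1), of k] by simp
  have \<delta>: "0 < cf_delta \<alpha> k" by (rule cf_delta_pos[OF assms(1)])
  have "cf_a \<alpha> (Suc k) * (n * cf_delta \<alpha> k) \<le> cf_a \<alpha> (Suc k) * cf_q \<alpha> k * cf_delta \<alpha> k"
    using assms(2) a \<delta> by (simp add: mult.assoc)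
  also have "\<dots> < 1" by (rule cf_a_q_delta_less_1[OF assms(1)])
  finally have "(cf_a \<alpha> (Suc k) * (n * cf_delta \<alpha> k))\<^sup>2 \<le> 1\<^sup>2" using a \<delta> by (intro power_mono) auto
  then show ?thesis using a by (simp add: field_simps power_mult_distrib)
qed

lemma cf_delta_less_half:
  assumes "\<alpha> \<notin> \<rat>" "1 \<le> k" shows "cf_delta \<alpha> k < 1/2"
proof -
  have "2 * cf_delta \<alpha> k \<le> cf_q \<alpha> (Suc k) * cf_delta \<alpha> k"
    using cf_q_ge_2[OF assms] cf_delta_pos[OF assms(1), of k] by (intro mult_right_mono) auto
  then show ?thesis using cf_q_delta_less_1[OF assms(1), of k] by linarith
qed

lemma cf_q_mult_eq: "real_of_int (cf_q \<alpha> k) * \<alpha> = cf_p \<alpha> k + (-1) ^ k * cf_delta \<alpha> k"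
  by (simp add: cf_delta_def algebra_simps flip: power_add mult_2)

lemma dist_int_cf_q:
  assumes "\<alpha> \<notin> \<rat>" "1 \<le> k" shows "dist_int (real_of_int (cf_q \<alpha> k) * \<alpha>) = cf_delta \<alpha> k"
proof -
  have "\<bar>(-1) ^ k * cf_delta \<alpha> k\<bar> = cf_delta \<alpha> k"
    using cf_delta_pos[OF assms(1), of k] by (simp add: abs_mult)
  moreover from this have "round (real_of_int (cf_q \<alpha> k) * \<alpha>) = cf_p \<alpha> k"
    using cf_delta_less_half[OF assms] by (intro round_unique') (simp add: cf_q_mult_eq)
  ultimately show ?thesis by (simp add: dist_int_def cf_q_mult_eq)
qed

lemma coprime_cf_q_cf_p: "coprime (cf_q \<alpha> k) (cf_p \<alpha> k)"
proof (cases k)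
  case (Suc j)
  show ?thesis
  proof (rule coprimeI)
    fix d assume "d dvd cf_q \<alpha> k" "d dvd cf_p \<alpha> k"
    then have "d dvd cf_p \<alpha> (Suc j) * cf_q \<alpha> j - cf_p \<alpha> j * cf_q \<alpha> (Suc j)"
      using Suc by simp
    then have "d dvd (-1) ^ j" by (simp only: cf_p_q_det)
    then show "is_unit d" by (rule dvd_unit_imp_unit) simp
  qed
qed simp

definition cf_residue :: "real \<Rightarrow> nat \<Rightarrow> nat \<Rightarrow> int" where
  "cf_residue \<alpha> k n = ((-1) ^ k * int n * cf_p \<alpha> k) mod cf_q \<alpha> k"

lemma cf_residue_inj:
  assumes "\<alpha> \<notin> \<rat>" shows "inj_on (cf_residue \<alpha> k) {n. int n < cf_q \<alpha> k}"
proof (rule inj_onI)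
  fix m n assume m: "m \<in> {n. int n < cf_q \<alpha> k}" and n: "n \<in> {n. int n < cf_q \<alpha> k}"
    and "cf_residue \<alpha> k m = cf_residue \<alpha> k n"
  then have "cf_q \<alpha> k dvd (-1) ^ k * int m * cf_p \<alpha> k - (-1) ^ k * int n * cf_p \<alpha> k"
    unfolding cf_residue_def by (simp only: mod_eq_dvd_iff)
  also have "(-1) ^ k * int m * cf_p \<alpha> k - (-1) ^ k * int n * cf_p \<alpha> k
      = (-1) ^ k * ((int m - int n) * cf_p \<alpha> k)"
    by (simp add: algebra_simps)
  finally have dvd: "cf_q \<alpha> k dvd int m - int n"
    by (simp add: dvd_mult_unit_iff' coprime_dvd_mult_left_iff[OF coprime_cf_q_cf_p])
  have "int m - int n = 0"
  proof (rule ccontr)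
    assume "int m - int n \<noteq> 0"
    then have "\<bar>cf_q \<alpha> k\<bar> \<le> \<bar>int m - int n\<bar>" using dvd by (rule dvd_imp_le_int)
    then show False using m n by auto
  qed
  then show "m = n" by simp
qed

lemma cf_residue_bounds:
  assumes "\<alpha> \<notin> \<rat>" "1 \<le> n" "int n < cf_q \<alpha> k"
  shows "1 \<le> cf_residue \<alpha> k n" "cf_residue \<alpha> k n < cf_q \<alpha> k"
proof -
  have q: "0 < cf_q \<alpha> k" by (rule cf_q_pos[OF assms(1)])
  have "cf_residue \<alpha> k n \<noteq> cf_residue \<alpha> k 0"
  proof
    assume "cf_residue \<alpha> k n = cf_residue \<alpha> k 0"
    then have "n = 0" using inj_onD[OF cf_residue_inj[OF assms(1)]] assms(3) q by auto
    then show False using assms(2) by simp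
  qed
  moreover have "0 \<le> cf_residue \<alpha> k n" "cf_residue \<alpha> k n < cf_q \<alpha> k"
    using q by (simp_all add: cf_residue_def)
  ultimately show "1 \<le> cf_residue \<alpha> k n" "cf_residue \<alpha> k n < cf_q \<alpha> k"
    by (simp_all add: cf_residue_def)
qed

section \<open>The quotient of sine products\<close>

lemma abs_sin_cot_mod:
  fixes m q :: int and w :: real
  assumes "0 < q"
  shows "\<bar>sin (pi * (m + w) / q)\<bar> = \<bar>sin (pi * (m mod q + w) / q)\<bar>"
    and "cot (pi * (m + w) / q) = cot (pi * (m mod q + w) / q)"
proof -
  have "real_of_int m = of_int (m mod q) + of_int q * of_int (m div q)"
    by (metis div_mult_mod_eq of_int_add of_int_mult mult.commute add.commute)
  then have "pi * (m + w) / q = pi * (m mod q + w) / q + of_int (m div q) * pi"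
    using assms by (simp add: field_simps)
  then show "\<bar>sin (pi * (m + w) / q)\<bar> = \<bar>sin (pi * (m mod q + w) / q)\<bar>"
    and "cot (pi * (m + w) / q) = cot (pi * (m mod q + w) / q)"
    by (simp_all only: abs_sin_add_int_pi cot_add_int_pi)
qed

lemma cf_angle_bounds:
  fixes x :: real
  assumes "\<alpha> \<notin> \<rat>" "int M < cf_q \<alpha> k" "-1 < x" "x + M * cf_delta \<alpha> k < 1" "n \<in> {1..M}"
  shows "0 < pi * (cf_residue \<alpha> k n + x) / cf_q \<alpha> k"
    and "0 \<le> pi * n * cf_delta \<alpha> k / cf_q \<alpha> k"
    and "pi * (cf_residue \<alpha> k n + x) / cf_q \<alpha> k + pi * n * cf_delta \<alpha> k / cf_q \<alpha> k < pi"
proof -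
  have q: "0 < real_of_int (cf_q \<alpha> k)" and \<delta>: "0 < cf_delta \<alpha> k"
    using cf_q_pos[OF assms(1)] cf_delta_pos[OF assms(1)] by simp_all
  have n: "1 \<le> n" "int n < cf_q \<alpha> k" using assms(2,5) by auto
  have r: "1 \<le> real_of_int (cf_residue \<alpha> k n)" "real_of_int (cf_residue \<alpha> k n) \<le> cf_q \<alpha> k - 1"
    using cf_residue_bounds[OF assms(1) n] by linarith+
  show "0 < pi * (cf_residue \<alpha> k n + x) / cf_q \<alpha> k" using q r assms(3) by simp
  show "0 \<le> pi * n * cf_delta \<alpha> k / cf_q \<alpha> k" using q \<delta> by simp
  have "real n * cf_delta \<alpha> k \<le> M * cf_delta \<alpha> k"
    using assms(5) \<delta> by (intro mult_right_mono) auto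
  then have "(cf_residue \<alpha> k n + x + n * cf_delta \<alpha> k) / cf_q \<alpha> k < 1"
    using q r assms(4) by simp
  from mult_strict_left_mono[OF this pi_gt_zero]
  show "pi * (cf_residue \<alpha> k n + x) / cf_q \<alpha> k + pi * n * cf_delta \<alpha> k / cf_q \<alpha> k < pi"
    by (simp add: add_divide_distrib algebra_simps)
qed

lemma sine_arg_sign_eq:
  fixes \<sigma> q \<alpha> p d n x :: real
  assumes "\<sigma> * \<sigma> = 1" "q \<noteq> 0" "q * \<alpha> = p + \<sigma> * d"
  shows "pi * (n * \<alpha> + \<sigma> * x / q) = \<sigma> * (pi * (\<sigma> * n * p + (n * d + x)) / q)"
proof -
  have "\<sigma> * (\<sigma> * n * p + (n * d + x)) = n * (q * \<alpha>) + \<sigma> * x"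
    using assms(1,3) by (simp add: algebra_simps)
  also have "\<dots> = q * (n * \<alpha> + \<sigma> * x / q)"
    using assms(2) by (simp add: algebra_simps)
  finally have "pi * (\<sigma> * (\<sigma> * n * p + (n * d + x))) / q = pi * (n * \<alpha> + \<sigma> * x / q)"
    using assms(2) by simp
  then show ?thesis by (simp add: mult.left_commute)
qed

lemma cf_sine_factors:
  fixes \<alpha> x :: real and k n :: nat
  assumes "\<alpha> \<notin> \<rat>"
  defines "p \<equiv> real_of_int (cf_p \<alpha> k)" and "q \<equiv> real_of_int (cf_q \<alpha> k)"
  defines "\<phi> \<equiv> pi * (cf_residue \<alpha> k n + x) / q" and "h \<equiv> pi * real n * cf_delta \<alpha> k / q"
  shows "\<bar>sin (pi * (real n * \<alpha> + (-1) ^ k * x / q))\<bar> = \<bar>sin (\<phi> + h)\<bar>"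
    and "\<bar>sin (pi * (real n * (p / q) + (-1) ^ k * x / q))\<bar> = \<bar>sin \<phi>\<bar>"
    and "cot (pi * (real n * (-1) ^ k * p + x) / q) = cot \<phi>"
proof -
  have q: "0 < cf_q \<alpha> k" by (rule cf_q_pos[OF assms(1)])
  define m where "m = (-1) ^ k * int n * cf_p \<alpha> k"
  have m: "real_of_int m = (-1) ^ k * real n * p" by (simp add: m_def p_def)
  have sign: "(-1) ^ k * (-1) ^ k = (1::real)" by (simp flip: power_add mult_2)
  have "\<bar>sin (pi * (real n * \<alpha> + (-1) ^ k * x / q))\<bar>
      = \<bar>sin (pi * (m + (real n * cf_delta \<alpha> k + x)) / q)\<bar>"
    using sine_arg_sign_eq[OF sign, of q \<alpha> p "cf_delta \<alpha> k" "real n" x] q cf_q_mult_eq[of \<alpha> k]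
      abs_sin_minus_one_power[of k "pi * (m + (real n * cf_delta \<alpha> k + x)) / q"]
    by (simp add: p_def q_def m)
  also have "\<dots> = \<bar>sin (\<phi> + h)\<bar>"
    using abs_sin_cot_mod(1)[OF q, of m "real n * cf_delta \<alpha> k + x"]
    by (simp add: \<phi>_def h_def q_def cf_residue_def m_def add_divide_distrib algebra_simps)
  finally show "\<bar>sin (pi * (real n * \<alpha> + (-1) ^ k * x / q))\<bar> = \<bar>sin (\<phi> + h)\<bar>" .
  have "\<bar>sin (pi * (real n * (p / q) + (-1) ^ k * x / q))\<bar> = \<bar>sin (pi * (m + x) / q)\<bar>"
    using sine_arg_sign_eq[OF sign, of q "p / q" p 0 "real n" x] q
      abs_sin_minus_one_power[of k "pi * (m + x) / q"]
    by (simp add: q_def m)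
  also have "\<dots> = \<bar>sin \<phi>\<bar>"
    using abs_sin_cot_mod(1)[OF q, of m x] by (simp add: \<phi>_def q_def cf_residue_def m_def)
  finally show "\<bar>sin (pi * (real n * (p / q) + (-1) ^ k * x / q))\<bar> = \<bar>sin \<phi>\<bar>" .
  show "cot (pi * (real n * (-1) ^ k * p + x) / q) = cot \<phi>"
    using abs_sin_cot_mod(2)[OF q, of m x] unfolding m
    by (simp add: \<phi>_def q_def cf_residue_def m_def mult_ac)
qed

lemma B_fun_eq_sum_defect:
  fixes x :: real
  assumes "\<alpha> \<notin> \<rat>" "1 \<le> k" "int M < cf_q \<alpha> k" "-1 < x" "x + M * cf_delta \<alpha> k < 1"
  shows "B_fun \<alpha> k M x = (\<Sum>n=1..M. sine_ratio_defect (pi * (cf_residue \<alpha> k n + x) / cf_q \<alpha> k)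
                                                      (pi * n * cf_delta \<alpha> k / cf_q \<alpha> k))"
proof -
  define p where "p = real_of_int (cf_p \<alpha> k)"
  define q where "q = real_of_int (cf_q \<alpha> k)"
  define \<phi> where "\<phi> n = pi * (cf_residue \<alpha> k n + x) / q" for n
  define h where "h n = pi * real n * cf_delta \<alpha> k / q" for n
  have pos: "0 < sin (\<phi> n)" "0 < sin (\<phi> n + h n)" if "n \<in> {1..M}" for n
    using cf_angle_bounds[OF assms(1,3,4,5) that] unfolding \<phi>_def h_def q_def
    by (auto intro: sin_gt_zero)
  have "sine_prod M \<alpha> ((-1) ^ k * x / q) / sine_prod M (p / q) ((-1) ^ k * x / q)
      = (\<Prod>n=1..M. 2 * sin (\<phi> n + h n)) / (\<Prod>n=1..M. 2 * sin (\<phi> n))"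
  proof -
    have num: "\<bar>2 * sin (pi * (real n * \<alpha> + (-1) ^ k * x / q))\<bar> = 2 * sin (\<phi> n + h n)"
      and den: "\<bar>2 * sin (pi * (real n * (p / q) + (-1) ^ k * x / q))\<bar> = 2 * sin (\<phi> n)"
      if "n \<in> {1..M}" for n
      using cf_sine_factors(1,2)[OF assms(1), where n = n and x = x and k = k] pos[OF that]
      by (simp_all add: abs_mult p_def q_def \<phi>_def h_def)
    show ?thesis unfolding sine_prod_def by (intro arg_cong2[where f = "(/)"] prod.cong refl num den)
  qed
  also have "\<dots> = (\<Prod>n=1..M. sin (\<phi> n + h n) / sin (\<phi> n))"
    by (simp add: prod_dividef[symmetric])
  finally have "ln (sine_prod M \<alpha> ((-1) ^ k * x / q) / sine_prod M (p / q) ((-1) ^ k * x / q))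
      = ln (\<Prod>n=1..M. sin (\<phi> n + h n) / sin (\<phi> n))"
    by simp
  also have "\<dots> = (\<Sum>n=1..M. ln (sin (\<phi> n + h n) / sin (\<phi> n)))"
  proof (rule ln_prod)
    fix n assume "n \<in> {1..M}"
    then show "sin (\<phi> n + h n) / sin (\<phi> n) \<noteq> 0" using pos[of n] by simp
  qed simp
  finally have "ln (sine_prod M \<alpha> ((-1) ^ k * x / q) / sine_prod M (p / q) ((-1) ^ k * x / q))
      = (\<Sum>n=1..M. ln (sin (\<phi> n + h n) / sin (\<phi> n)))" .
  moreover have "(\<Sum>n=1..M. sin (pi * n * dist_int (q * \<alpha>) / q) * cot (pi * (n * (-1) ^ k * p + x) / q))
      = (\<Sum>n=1..M. sin (h n) * cot (\<phi> n))"
    by (simp add: dist_int_cf_q[OF assms(1,2)] cf_sine_factors(3)[OF assms(1)] p_def q_def \<phi>_def h_def)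
  ultimately show ?thesis
    by (simp add: B_fun_def Let_def sine_ratio_defect_def sum_subtractf p_def q_def \<phi>_def h_def)
qed

lemma B_fun_nonpos:
  fixes x :: real
  assumes "\<alpha> \<notin> \<rat>" "1 \<le> k" "int M < cf_q \<alpha> k" "-1 < x" "x + M * cf_delta \<alpha> k < 1"
  shows "B_fun \<alpha> k M x \<le> 0"
  unfolding B_fun_eq_sum_defect[OF assms]
  by (intro sum_nonpos sine_ratio_defect_nonpos cf_angle_bounds[OF assms(1,3-5)])

lemma sum_cf_residue_inverse_squares_le:
  fixes x :: real
  assumes "\<alpha> \<notin> \<rat>" "int M < cf_q \<alpha> k" "\<bar>x\<bar> < 1"
  shows "(\<Sum>n=1..M. 1 / (cf_residue \<alpha> k n + x)\<^sup>2 + 1 / (cf_q \<alpha> k - cf_residue \<alpha> k n - x)\<^sup>2)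
           \<le> 4 / (1 - \<bar>x\<bar>)\<^sup>2"
proof -
  define r where "r = cf_residue \<alpha> k"
  define r' where "r' n = cf_q \<alpha> k - r n" for n
  have sub: "{1..M} \<subseteq> {n. int n < cf_q \<alpha> k}" using assms(2) by auto
  have inj: "inj_on r {1..M}"
    using inj_on_subset[OF cf_residue_inj[OF assms(1)] sub] unfolding r_def .
  then have inj': "inj_on r' {1..M}"
    by (intro inj_onI) (auto dest: inj_onD simp: r'_def)
  have "1 \<le> r n" "1 \<le> r' n" if "n \<in> {1..M}" for n
    using cf_residue_bounds[OF assms(1), of n k] that assms(2) by (auto simp: r_def r'_def)
  then have pos: "r ` {1..M} \<subseteq> {1..}" "r' ` {1..M} \<subseteq> {1..}" by auto
  have "(\<Sum>n=1..M. 1 / (r n + x)\<^sup>2) = (\<Sum>m\<in>r ` {1..M}. 1 / (m + x)\<^sup>2)"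
    by (subst sum.reindex[OF inj]) (simp add: comp_def)
  also have "\<dots> \<le> 2 / (1 - \<bar>x\<bar>)\<^sup>2"
    using pos(1) assms(3) by (intro sum_inverse_shifted_square_le) auto
  finally have S1: "(\<Sum>n=1..M. 1 / (r n + x)\<^sup>2) \<le> 2 / (1 - \<bar>x\<bar>)\<^sup>2" .
  have "(\<Sum>n=1..M. 1 / (r' n + - x)\<^sup>2) = (\<Sum>m\<in>r' ` {1..M}. 1 / (m + - x)\<^sup>2)"
    by (subst sum.reindex[OF inj']) (simp add: comp_def)
  also have "\<dots> \<le> 2 / (1 - \<bar>- x\<bar>)\<^sup>2"
    using pos(2) assms(3) by (intro sum_inverse_shifted_square_le) auto
  finally have S2: "(\<Sum>n=1..M. 1 / (r' n + - x)\<^sup>2) \<le> 2 / (1 - \<bar>x\<bar>)\<^sup>2" by simp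
  show ?thesis
    using S1 S2 by (simp add: sum.distrib r_def r'_def algebra_simps)
qed

lemma add_mult_cf_delta_less_1:
  fixes x c :: real
  assumes "\<alpha> \<notin> \<rat>" "int M < cf_q \<alpha> k" "0 < c" "c < 1"
    and "x \<le> 1 - cf_q \<alpha> k * cf_delta \<alpha> k / (1 - c)"
  shows "x + M * cf_delta \<alpha> k < 1"
proof -
  have "real M * cf_delta \<alpha> k < cf_q \<alpha> k * cf_delta \<alpha> k"
    using assms(2) cf_delta_pos[OF assms(1)] by simp
  also have "\<dots> \<le> cf_q \<alpha> k * cf_delta \<alpha> k / (1 - c)"
    using cf_q_pos[OF assms(1), of k] cf_delta_pos[OF assms(1), of k] assms(3,4)
    by (simp add: field_simps)
  finally show ?thesis using assms(5) by linarith
qed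

lemma scaled_angles:
  fixes q r x d :: real
  assumes "0 < q" "0 < r + x" "0 < q - r - x"
  defines "\<phi> \<equiv> pi * (r + x) / q" and "h \<equiv> pi * d / q"
  shows "h / (pi - \<phi>) = d / (q - r - x)"
    and "h\<^sup>2 * (1 / \<phi>\<^sup>2 + 1 / (pi - \<phi>)\<^sup>2) = d\<^sup>2 * (1 / (r + x)\<^sup>2 + 1 / (q - r - x)\<^sup>2)"
proof -
  have pi_minus: "pi - \<phi> = pi * (q - r - x) / q" using assms(1) by (simp add: \<phi>_def field_simps)
  have ratio1: "h / \<phi> = d / (r + x)" using assms(1,2) by (simp add: \<phi>_def h_def)
  show ratio2: "h / (pi - \<phi>) = d / (q - r - x)" using assms(1,3) by (simp add: pi_minus h_def)
  have "h\<^sup>2 * (1 / \<phi>\<^sup>2 + 1 / (pi - \<phi>)\<^sup>2) = (h / \<phi>)\<^sup>2 + (h / (pi - \<phi>))\<^sup>2"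
    by (simp add: power_divide distrib_left)
  then show "h\<^sup>2 * (1 / \<phi>\<^sup>2 + 1 / (pi - \<phi>)\<^sup>2) = d\<^sup>2 * (1 / (r + x)\<^sup>2 + 1 / (q - r - x)\<^sup>2)"
    unfolding ratio1 ratio2 by (simp add: power_divide distrib_left)
qed

lemma cf_sine_ratio_defect_ge:
  fixes x c :: real
  assumes "\<alpha> \<notin> \<rat>" "int M < cf_q \<alpha> k" "0 < c" "c < 1" "-1 < x"
    and "x \<le> 1 - cf_q \<alpha> k * cf_delta \<alpha> k / (1 - c)" and "n \<in> {1..M}"
  defines "D \<equiv> 1 / (cf_residue \<alpha> k n + x)\<^sup>2 + 1 / (cf_q \<alpha> k - cf_residue \<alpha> k n - x)\<^sup>2"
  shows "- 200 * ln (4 / c) / (cf_a \<alpha> (Suc k))\<^sup>2 * D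
           \<le> sine_ratio_defect (pi * (cf_residue \<alpha> k n + x) / cf_q \<alpha> k) (pi * n * cf_delta \<alpha> k / cf_q \<alpha> k)"
proof -
  define q where "q = real_of_int (cf_q \<alpha> k)"
  define \<delta> where "\<delta> = cf_delta \<alpha> k"
  define r where "r = real_of_int (cf_residue \<alpha> k n)"
  define \<phi> where "\<phi> = pi * (r + x) / q"
  define h where "h = pi * (n * \<delta>) / q"
  have q: "0 < q" and \<delta>: "0 < \<delta>"
    using cf_q_pos[OF assms(1), of k] cf_delta_pos[OF assms(1), of k] by (simp_all add: q_def \<delta>_def)
  have r: "1 \<le> r" "r \<le> q - 1"
    using cf_residue_bounds[OF assms(1), of n k] assms(2,7) by (auto simp: r_def q_def)
  have n: "real n \<le> q" using assms(2,7) by (simp add: q_def)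
  have "0 < q * \<delta> / (1 - c)" using q \<delta> assms(4) by simp
  then have x: "x < 1" using assms(6) by (simp add: q_def \<delta>_def)
  have q\<delta>: "q * \<delta> \<le> (1 - c) * (1 - x)" using assms(4,6) by (simp add: q_def \<delta>_def field_simps)
  have "0 < r + x" "0 < q - r - x" using r x assms(5) by linarith+
  note scaled = scaled_angles[OF q this, of "n * \<delta>", folded \<phi>_def h_def]
  note angles = cf_angle_bounds[OF assms(1,2,5) add_mult_cf_delta_less_1[OF assms(1-4,6)] assms(7)]
  have "h / (pi - \<phi>) \<le> q * \<delta> / (1 - x)"
    unfolding scaled(1) using n x \<delta> mult_pos_pos[OF q \<delta>] r(2) by (intro frac_le mult_right_mono) auto
  also have "\<dots> \<le> 1 - c" using q\<delta> x by (simp add: field_simps)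
  finally have "c \<le> 1 - h / (pi - \<phi>)" by simp
  then have defect: "- 200 * ln (4 / c) * (h\<^sup>2 * (1 / \<phi>\<^sup>2 + 1 / (pi - \<phi>)\<^sup>2)) \<le> sine_ratio_defect \<phi> h"
    using angles assms(3,4) by (intro sine_ratio_defect_ge) (auto simp: \<phi>_def h_def q_def r_def \<delta>_def)
  have D_eq: "D = 1 / (r + x)\<^sup>2 + 1 / (q - r - x)\<^sup>2" by (simp add: D_def r_def q_def)
  have "(n * \<delta>)\<^sup>2 \<le> 1 / (cf_a \<alpha> (Suc k))\<^sup>2"
    using cf_delta_mult_square_le[OF assms(1), of n k] n by (simp add: q_def \<delta>_def)
  then have "h\<^sup>2 * (1 / \<phi>\<^sup>2 + 1 / (pi - \<phi>)\<^sup>2) \<le> 1 / (cf_a \<alpha> (Suc k))\<^sup>2 * D"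
    unfolding scaled(2) D_eq by (rule mult_right_mono) simp
  then have "200 * ln (4 / c) * (h\<^sup>2 * (1 / \<phi>\<^sup>2 + 1 / (pi - \<phi>)\<^sup>2))
      \<le> 200 * ln (4 / c) * (1 / (cf_a \<alpha> (Suc k))\<^sup>2 * D)"
    using assms(3,4) by (intro mult_left_mono) auto
  moreover have "- 200 * ln (4 / c) / (cf_a \<alpha> (Suc k))\<^sup>2 * D
      = - (200 * ln (4 / c) * (1 / (cf_a \<alpha> (Suc k))\<^sup>2 * D))"
    by simp
  ultimately have "- 200 * ln (4 / c) / (cf_a \<alpha> (Suc k))\<^sup>2 * D \<le> sine_ratio_defect \<phi> h"
    using defect by linarith
  then show ?thesis by (simp add: \<phi>_def h_def r_def q_def \<delta>_def mult.assoc)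
qed

lemma B_fun_ge:
  fixes x c :: real
  assumes "\<alpha> \<notin> \<rat>" "1 \<le> k" "int M < cf_q \<alpha> k" "0 < c" "c < 1" "-1 < x"
    and "x \<le> 1 - cf_q \<alpha> k * cf_delta \<alpha> k / (1 - c)"
  shows "- 800 * ln (4 / c) / ((1 - \<bar>x\<bar>)\<^sup>2 * (cf_a \<alpha> (Suc k))\<^sup>2) \<le> B_fun \<alpha> k M x"
proof -
  define D where "D n = 1 / (cf_residue \<alpha> k n + x)\<^sup>2 + 1 / (cf_q \<alpha> k - cf_residue \<alpha> k n - x)\<^sup>2" for n
  define K where "K = 200 * ln (4 / c) / (cf_a \<alpha> (Suc k))\<^sup>2"
  have angles: "x + M * cf_delta \<alpha> k < 1"
    using add_mult_cf_delta_less_1[OF assms(1,3-5,7)] .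
  moreover have "0 \<le> real M * cf_delta \<alpha> k" using cf_delta_pos[OF assms(1), of k] by simp
  ultimately have "\<bar>x\<bar> < 1" using assms(6) unfolding abs_less_iff by linarith
  have "- K * D n \<le> sine_ratio_defect (pi * (cf_residue \<alpha> k n + x) / cf_q \<alpha> k)
                                           (pi * n * cf_delta \<alpha> k / cf_q \<alpha> k)"
    if "n \<in> {1..M}" for n
    using cf_sine_ratio_defect_ge[OF assms(1,3-7) that] by (simp add: K_def D_def)
  then have "(\<Sum>n=1..M. - K * D n) \<le> B_fun \<alpha> k M x"
    unfolding B_fun_eq_sum_defect[OF assms(1-3,6) angles] by (rule sum_mono)
  moreover have "K * (\<Sum>n=1..M. D n) \<le> K * (4 / (1 - \<bar>x\<bar>)\<^sup>2)"
    using sum_cf_residue_inverse_squares_le[OF assms(1,3) \<open>\<bar>x\<bar> < 1\<close>] assms(4,5)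
    by (intro mult_left_mono) (auto simp: K_def D_def)
  moreover have "K * (4 / (1 - \<bar>x\<bar>)\<^sup>2) = 800 * ln (4 / c) / ((1 - \<bar>x\<bar>)\<^sup>2 * (cf_a \<alpha> (Suc k))\<^sup>2)"
    by (simp add: K_def)
  ultimately show ?thesis by (simp add: sum_negf sum_distrib_left)
qed

section \<open>Ostrowski expansions\<close>

lemma alternating_tail_bounds:
  assumes "\<alpha> \<notin> \<rat>" "\<forall>l<K. int (b l) \<le> cf_a \<alpha> (Suc l)" "1 \<le> j"
  shows "- cf_delta \<alpha> j \<le> (\<Sum>l\<in>{j..<K}. (-1) ^ (l + j) * real (b l) * cf_delta \<alpha> l)
       \<and> (\<Sum>l\<in>{j..<K}. (-1) ^ (l + j) * real (b l) * cf_delta \<alpha> l) \<le> cf_delta \<alpha> (j - 1)"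
  using assms(3)
proof (induction "K - j" arbitrary: j)
  case 0
  then show ?case using cf_delta_pos[OF assms(1)] by (simp add: less_imp_le)
next
  case (Suc d)
  define S where "S i = (\<Sum>l\<in>{i..<K}. (-1) ^ (l + i) * real (b l) * cf_delta \<alpha> l)" for i
  have "j < K" using Suc.hyps(2) by simp
  have "S j = b j * cf_delta \<alpha> j + (\<Sum>l\<in>{Suc j..<K}. (-1) ^ (l + j) * real (b l) * cf_delta \<alpha> l)"
    using \<open>j < K\<close> by (simp add: S_def atLeastSucLessThan_greaterThanLessThan sum.atLeast_Suc_lessThan
        flip: power_add mult_2)
  also have "\<dots> = b j * cf_delta \<alpha> j - S (Suc j)"
    by (simp add: S_def sum_negf[symmetric])
  finally have S_j: "S j = b j * cf_delta \<alpha> j - S (Suc j)" .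
  have IH: "- cf_delta \<alpha> (Suc j) \<le> S (Suc j)" "S (Suc j) \<le> cf_delta \<alpha> j"
    using Suc.hyps(1)[of "Suc j"] Suc.hyps(2) by (simp_all add: S_def)
  have "real (b j) * cf_delta \<alpha> j \<le> cf_a \<alpha> (Suc j) * cf_delta \<alpha> j"
    using assms(2) \<open>j < K\<close> cf_delta_pos[OF assms(1), of j] by (intro mult_right_mono) auto
  moreover have "cf_delta \<alpha> (j - 1) = cf_a \<alpha> (Suc j) * cf_delta \<alpha> j + cf_delta \<alpha> (Suc j)"
    using cf_delta_eq[of \<alpha> "j - 1"] Suc.prems by simp
  moreover have "0 \<le> real (b j) * cf_delta \<alpha> j" using cf_delta_pos[OF assms(1), of j] by simp
  ultimately show ?case using S_j IH unfolding S_def by linarith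
qed

lemma ostrowski_eps_bounds:
  assumes "\<alpha> \<notin> \<rat>" "\<forall>l<K. int (b l) \<le> cf_a \<alpha> (Suc l)"
  shows "- (real_of_int (cf_q \<alpha> k) * cf_delta \<alpha> k) \<le> ostrowski_eps \<alpha> K b k"
    and "ostrowski_eps \<alpha> K b k \<le> real_of_int (cf_q \<alpha> k) * cf_delta \<alpha> (Suc k)"
proof -
  define S where "S = (\<Sum>l\<in>{Suc k..<K}. (-1) ^ (l + Suc k) * real (b l) * cf_delta \<alpha> l)"
  have "(\<Sum>l\<in>{k+1..<K}. (-1) ^ (k + l) * real (b l) * dist_int (real_of_int (cf_q \<alpha> l) * \<alpha>)) = - S"
    unfolding S_def sum_negf[symmetric]
    by (rule sum.cong) (simp_all add: dist_int_cf_q[OF assms(1)] add.commute)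
  then have "ostrowski_eps \<alpha> K b k = - cf_q \<alpha> k * S" by (simp add: ostrowski_eps_def)
  moreover have "- cf_delta \<alpha> (Suc k) \<le> S" "S \<le> cf_delta \<alpha> k"
    using alternating_tail_bounds[OF assms, of "Suc k"] by (simp_all add: S_def)
  moreover have "0 \<le> real_of_int (cf_q \<alpha> k)" using cf_q_pos[OF assms(1), of k] by simp
  ultimately show "- (real_of_int (cf_q \<alpha> k) * cf_delta \<alpha> k) \<le> ostrowski_eps \<alpha> K b k"
    and "ostrowski_eps \<alpha> K b k \<le> real_of_int (cf_q \<alpha> k) * cf_delta \<alpha> (Suc k)"
    using mult_left_mono[of S "cf_delta \<alpha> k" "cf_q \<alpha> k"]
      mult_left_mono[of "- cf_delta \<alpha> (Suc k)" S "cf_q \<alpha> k"] by simp_all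
qed

lemma B_fun_ostrowski_nonpos:
  fixes \<alpha> :: real and b :: "nat \<Rightarrow> nat"
  assumes "\<alpha> \<notin> \<rat>" "\<forall>l<K. int (b l) \<le> cf_a \<alpha> (Suc l)" "1 \<le> k" "k < K"
    and "int M < cf_q \<alpha> k" "bb + 1 \<le> b k"
  shows "B_fun \<alpha> k M (real bb * real_of_int (cf_q \<alpha> k) * dist_int (real_of_int (cf_q \<alpha> k) * \<alpha>)
                        + ostrowski_eps \<alpha> K b k) \<le> 0"
proof -
  define q where "q = real_of_int (cf_q \<alpha> k)"
  define \<delta> where "\<delta> j = cf_delta \<alpha> j" for j
  define a where "a = real_of_int (cf_a \<alpha> (Suc k))"
  define x where "x = real bb * q * \<delta> k + ostrowski_eps \<alpha> K b k"
  have q: "0 < q" and \<delta>: "0 < \<delta> k" and a: "1 \<le> a"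
    using cf_q_pos[OF assms(1), of k] cf_delta_pos[OF assms(1), of k] cf_a_ge_1[OF assms(1), of k]
    by (simp_all add: q_def \<delta>_def a_def)
  note eps = ostrowski_eps_bounds[OF assms(1,2), of k, folded q_def \<delta>_def]
  have "q * \<delta> k \<le> a * q * \<delta> k" using a q \<delta> by simp
  also have "\<dots> < 1" using cf_a_q_delta_less_1[OF assms(1), of k] by (simp add: a_def q_def \<delta>_def)
  finally have "q * \<delta> k < 1" .
  moreover have "0 \<le> real bb * q * \<delta> k" using q \<delta> by simp
  ultimately have "-1 < x" using eps(1) unfolding x_def by linarith
  have "real bb * (q * \<delta> k) \<le> (real (b k) - 1) * (q * \<delta> k)"
    using assms(6) q \<delta> by (intro mult_right_mono) auto
  moreover have "real (b k) * (q * \<delta> k) \<le> a * (q * \<delta> k)"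
    using assms(2,4) q \<delta> by (intro mult_right_mono) (auto simp: a_def)
  moreover have "real M * \<delta> k < q * \<delta> k" using assms(5) \<delta> by (simp add: q_def)
  moreover have "q * \<delta> (k - 1) = a * (q * \<delta> k) + q * \<delta> (Suc k)"
    using cf_delta_eq[of \<alpha> "k - 1"] assms(3) by (simp add: a_def \<delta>_def algebra_simps)
  moreover have "q * \<delta> (k - 1) < 1"
    using cf_q_delta_less_1[OF assms(1), of "k - 1"] assms(3) by (simp add: q_def \<delta>_def)
  ultimately have "x + M * \<delta> k < 1" using eps(2) by (simp add: x_def algebra_simps)
  then have "B_fun \<alpha> k M x \<le> 0"
    using B_fun_nonpos[OF assms(1,3,5) \<open>-1 < x\<close>] by (simp add: \<delta>_def)
  then show ?thesis by (simp add: x_def q_def \<delta>_def dist_int_cf_q[OF assms(1,3)])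
qed

lemma nonpos_le_cf_bound:
  assumes "\<alpha> \<notin> \<rat>" "0 < C" "y \<le> 0"
  shows "y \<le> C / ((real_of_int (cf_a \<alpha> (k + 1)))\<^sup>2 * real_of_int (cf_q \<alpha> k))"
proof -
  have "0 < C / ((real_of_int (cf_a \<alpha> (k + 1)))\<^sup>2 * real_of_int (cf_q \<alpha> k))"
    using assms(2) cf_a_ge_1[OF assms(1), of k] cf_q_pos[OF assms(1), of k] by simp
  then show ?thesis using assms(3) by linarith
qed

theorem proposition2:
  shows
  "(\<exists>C>0. \<forall>\<alpha> k M c x.
      \<alpha> \<notin> \<rat> \<longrightarrow> 1 \<le> k \<longrightarrow> int M < cf_q \<alpha> k \<longrightarrow>
      10 / (real_of_int (cf_q \<alpha> k))\<^sup>2 \<le> c \<longrightarrow> c < 1 \<longrightarrow>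
      real_of_int (cf_q \<alpha> k) * dist_int (real_of_int (cf_q \<alpha> k) * \<alpha>) \<le> 1 - c \<longrightarrow>
      -1 < x \<longrightarrow>
      x \<le> 1 - real_of_int (cf_q \<alpha> k) * dist_int (real_of_int (cf_q \<alpha> k) * \<alpha>) / (1 - c) \<longrightarrow>
        - C * ln (4 / c) / ((1 - \<bar>x\<bar>)\<^sup>2 * (real_of_int (cf_a \<alpha> (k + 1)))\<^sup>2) \<le> B_fun \<alpha> k M x
        \<and> B_fun \<alpha> k M x \<le> C / ((real_of_int (cf_a \<alpha> (k + 1)))\<^sup>2 * real_of_int (cf_q \<alpha> k)))
   \<and>
   (\<exists>C>0. \<forall>\<alpha> N K b k M bb.
      \<alpha> \<notin> \<rat> \<longrightarrow> ostrowski_expansion \<alpha> N K b \<longrightarrow>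
      1 \<le> k \<longrightarrow> k \<le> K - 1 \<longrightarrow> int M < cf_q \<alpha> k \<longrightarrow> bb + 1 \<le> b k \<longrightarrow>
        B_fun \<alpha> k M (real bb * real_of_int (cf_q \<alpha> k) * dist_int (real_of_int (cf_q \<alpha> k) * \<alpha>)
                      + ostrowski_eps \<alpha> K b k)
          \<le> C / ((real_of_int (cf_a \<alpha> (k + 1)))\<^sup>2 * real_of_int (cf_q \<alpha> k)))"
proof (intro conjI exI[of _ 800] allI impI)
  fix \<alpha> c x :: real and k M :: nat
  assume \<alpha>: "\<alpha> \<notin> \<rat>" and k: "1 \<le> k" and M: "int M < cf_q \<alpha> k"
    and c10: "10 / (real_of_int (cf_q \<alpha> k))\<^sup>2 \<le> c" and c: "c < 1" and x: "-1 < x"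
    and "x \<le> 1 - real_of_int (cf_q \<alpha> k) * dist_int (real_of_int (cf_q \<alpha> k) * \<alpha>) / (1 - c)"
  then have x': "x \<le> 1 - cf_q \<alpha> k * cf_delta \<alpha> k / (1 - c)" by (simp add: dist_int_cf_q[OF \<alpha> k])
  have "0 < 10 / (real_of_int (cf_q \<alpha> k))\<^sup>2" using cf_q_pos[OF \<alpha>, of k] by simp
  then have c0: "0 < c" using c10 by linarith
  show "- 800 * ln (4 / c) / ((1 - \<bar>x\<bar>)\<^sup>2 * (real_of_int (cf_a \<alpha> (k + 1)))\<^sup>2) \<le> B_fun \<alpha> k M x"
    using B_fun_ge[OF \<alpha> k M c0 c x x'] by simp
  show "B_fun \<alpha> k M x \<le> 800 / ((real_of_int (cf_a \<alpha> (k + 1)))\<^sup>2 * real_of_int (cf_q \<alpha> k))"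
    using B_fun_nonpos[OF \<alpha> k M x add_mult_cf_delta_less_1[OF \<alpha> M c0 c x']]
    by (intro nonpos_le_cf_bound[OF \<alpha>]) simp_all
next
  fix \<alpha> :: real and N K k M bb :: nat and b :: "nat \<Rightarrow> nat"
  assume \<alpha>: "\<alpha> \<notin> \<rat>" and "ostrowski_expansion \<alpha> N K b" and "1 \<le> k" "k \<le> K - 1"
    and "int M < cf_q \<alpha> k" "bb + 1 \<le> b k"
  then show "B_fun \<alpha> k M (real bb * real_of_int (cf_q \<alpha> k) * dist_int (real_of_int (cf_q \<alpha> k) * \<alpha>)
                    + ostrowski_eps \<alpha> K b k)
        \<le> 800 / ((real_of_int (cf_a \<alpha> (k + 1)))\<^sup>2 * real_of_int (cf_q \<alpha> k))"
    by (intro nonpos_le_cf_bound[OF \<alpha>] B_fun_ostrowski_nonpos) (auto simp: ostrowski_expansion_def)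
qed simp_all

end
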